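(* For every fixed $t\in\mathcal{T}$, every fixed $y_0$, and with the remaining arguments held fixed, the state-of-charge functional $y(x^0,x^\uparrow,x^\downarrow,\xi,y_0,t)$ is concave and decreasing in $x^0\in\mathcal{F}(\mathcal{T},\mathbb{R})$, concave and nonincreasing in $x^\uparrow\in\mathcal{F}(\mathcal{T},\mathbb{R}_+)$, concave and nondecreasing in $x^\downarrow\in\mathcal{F}(\mathcal{T},\mathbb{R}_+)$, and nonincreasing in $\xi\in\mathcal{R}(\mathcal{T},[-1,1])$. Monotonicity is with respect to the pointwise order on functions, and concavity refers to the vector-space structure of the corresponding function spaces.
   Context: Fix a positive integer $K$, $\Delta t>0$, $T=K\Delta t$ and $\mathcal{T}=[0,T]$. Partition $\mathcal{T}$ into the intervals $\mathcal{T}_k=[(k-1)\Delta t,k\Delta t)$ for $k<K$ and $\mathcal{T}_K=[T-\Delta t,T]$. For $U\subseteq\mathbb{R}$, let $\mathcal{F}(\mathcal{T},U)$ be the set of functions $\mathcal{T}\to U$ that are constant on each $\mathcal{T}_k$, and let $\mathcal{R}(\mathcal{T},U)$ be the set of Riemann integrable functions $\mathcal{T}\to U$. Write $[z]^+=\max\{z,0\}$ and $[z]^-=\max\{-z,0\}$. Let $\eta^{c},\eta^{d}\in(0,1)$ be the charging and discharging efficiencies and let $y_0\ge 0$. The power output is $x(a,b,c,s)=a+[s]^+b-[s]^-c$ for $a\in\mathbb{R}$, $b,c\ge0$, $s\in\mathbb{R}$. For $x^0\in\mathcal{F}(\mathcal{T},\mathbb{R})$, $x^\uparrow,x^\downarrow\in\mathcal{F}(\mathcal{T},\mathbb{R}_+)$,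 $\xi\in\mathcal{R}(\mathcal{T},[-1,1])$ and $t\in\mathcal{T}$, the state of charge is $$y(x^0,x^\uparrow,x^\downarrow,\xi,y_0,t)=y_0+\int_0^t \eta^{c}\big[x(x^0(\tau),x^\uparrow(\tau),x^\downarrow(\tau),\xi(\tau))\big]^- -\frac{1}{\eta^{d}}\big[x(x^0(\tau),x^\uparrow(\tau),x^\downarrow(\tau),\xi(\tau))\big]^+\,d\tau .$$ *)

theory Defs
  imports "HOL-Analysis.Analysis"
begin

definition Tk :: "nat \<Rightarrow> real \<Rightarrow> nat \<Rightarrow> real set" where
  "Tk K dt k = (if k < K then {(real k - 1) * dt ..< real k * dt}
                else {real K * dt - dt .. real K * dt})"

text \<open>F(T,U): functions on [0,T] with values in U, constant on each T_k.\<close>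
definition pc_fun :: "nat \<Rightarrow> real \<Rightarrow> real set \<Rightarrow> (real \<Rightarrow> real) set" where
  "pc_fun K dt U = {f. (\<forall>\<tau>\<in>{0 .. real K * dt}. f \<tau> \<in> U) \<and>
                       (\<forall>k\<in>{1..K}. \<exists>c. \<forall>\<tau>\<in>Tk K dt k. f \<tau> = c)}"

text \<open>Riemann integrability on [a,b]: limit of Riemann sums as the mesh goes to 0.\<close>
definition riemann_integrable :: "(real \<Rightarrow> real) \<Rightarrow> real \<Rightarrow> real \<Rightarrow> bool" where
  "riemann_integrable f a b \<longleftrightarrow>
     (\<exists>I. \<forall>e>0. \<exists>d>0. \<forall>p. p tagged_division_of {a..b} \<and> (\<lambda>x. ball x d) fine p \<longrightarrow>
        \<bar>(\<Sum>(x,J)\<in>p. Henstock_Kurzweil_Integration.content (J::real set) * f x) - I\<bar> < e)"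

text \<open>R(T,U): Riemann integrable functions on [0,T] with values in U.\<close>
definition r_fun :: "nat \<Rightarrow> real \<Rightarrow> real set \<Rightarrow> (real \<Rightarrow> real) set" where
  "r_fun K dt U = {f. (\<forall>\<tau>\<in>{0 .. real K * dt}. f \<tau> \<in> U) \<and> riemann_integrable f 0 (real K * dt)}"

definition pospart :: "real \<Rightarrow> real" where "pospart z = max z 0"
definition negpart :: "real \<Rightarrow> real" where "negpart z = max (- z) 0"

definition pout :: "real \<Rightarrow> real \<Rightarrow> real \<Rightarrow> real \<Rightarrow> real" where
  "pout a b c s = a + pospart s * b - negpart s * c"

definition soc :: "real \<Rightarrow> real \<Rightarrow> (real \<Rightarrow> real) \<Rightarrow> (real \<Rightarrow> real) \<Rightarrow> (real \<Rightarrow> real)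
                   \<Rightarrow> (real \<Rightarrow> real) \<Rightarrow> real \<Rightarrow> real \<Rightarrow> real" where
  "soc etac etad x0 xu xd xi y0 t = y0 + integral {0..t}
     (\<lambda>\<tau>. etac * negpart (pout (x0 \<tau>) (xu \<tau>) (xd \<tau>) (xi \<tau>))
           - (1 / etad) * pospart (pout (x0 \<tau>) (xu \<tau>) (xd \<tau>) (xi \<tau>)))"

definition concave_fun :: "(real \<Rightarrow> real) set \<Rightarrow> ((real \<Rightarrow> real) \<Rightarrow> real) \<Rightarrow> bool" where
  "concave_fun S g \<longleftrightarrow> (\<forall>a\<in>S. \<forall>b\<in>S. \<forall>l::real. 0 \<le> l \<and> l \<le> 1 \<longrightarrow>
      l * g a + (1 - l) * g b \<le> g (\<lambda>\<tau>. l * a \<tau> + (1 - l) * b \<tau>))"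

definition antimono_fun :: "real \<Rightarrow> (real \<Rightarrow> real) set \<Rightarrow> ((real \<Rightarrow> real) \<Rightarrow> real) \<Rightarrow> bool" where
  "antimono_fun T S g \<longleftrightarrow> (\<forall>a\<in>S. \<forall>b\<in>S. (\<forall>\<tau>\<in>{0..T}. a \<tau> \<le> b \<tau>) \<longrightarrow> g b \<le> g a)"

definition mono_fun :: "real \<Rightarrow> (real \<Rightarrow> real) set \<Rightarrow> ((real \<Rightarrow> real) \<Rightarrow> real) \<Rightarrow> bool" where
  "mono_fun T S g \<longleftrightarrow> (\<forall>a\<in>S. \<forall>b\<in>S. (\<forall>\<tau>\<in>{0..T}. a \<tau> \<le> b \<tau>) \<longrightarrow> g a \<le> g b)"

end

theory Submission
  imports Defs
begin

text \<open>The rate \<open>\<eta>\<^sup>c [p]\<^sup>- - [p]\<^sup>+ / \<eta>\<^sup>d\<close> at which the state of charge changes under power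
  output \<open>p\<close> equals \<open>min (-\<eta>\<^sup>c p) (-p / \<eta>\<^sup>d)\<close> because \<open>\<eta>\<^sup>c \<eta>\<^sup>d \<le> 1\<close>; hence it is a concave,
  nonincreasing function of \<open>p\<close>. The power output is affine in each of \<open>x\<^sup>0, x\<^sup>\<up>, x\<^sup>\<down>\<close>,
  nondecreasing in \<open>x\<^sup>0, x\<^sup>\<up>\<close>, nonincreasing in \<open>x\<^sup>\<down>\<close>, and nondecreasing in \<open>\<xi>\<close> as long as
  \<open>x\<^sup>\<up>, x\<^sup>\<down> \<ge> 0\<close>. Linearity and monotonicity of the integral transfer these properties to
  the state of charge. All integrands are bounded and Lebesgue measurable on \<open>[0, t]\<close>,
  hence integrable.\<close>

definition bounded_measurable_on :: "real set \<Rightarrow> (real \<Rightarrow> real) \<Rightarrow> bool" where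
  "bounded_measurable_on S f \<longleftrightarrow>
     f \<in> borel_measurable (lebesgue_on S) \<and> (\<exists>M. \<forall>x\<in>S. \<bar>f x\<bar> \<le> M)"

lemma bounded_measurable_on_const: "bounded_measurable_on S (\<lambda>x. c)"
  unfolding bounded_measurable_on_def by auto

lemma bounded_measurable_on_uminus:
  "bounded_measurable_on S f \<Longrightarrow> bounded_measurable_on S (\<lambda>x. - f x)"
  unfolding bounded_measurable_on_def by auto

lemma bounded_measurable_on_add:
  assumes "bounded_measurable_on S f" "bounded_measurable_on S g"
  shows "bounded_measurable_on S (\<lambda>x. f x + g x)"
proof -
  obtain M N where "\<forall>x\<in>S. \<bar>f x\<bar> \<le> M" "\<forall>x\<in>S. \<bar>g x\<bar> \<le> N"
    using assms unfolding bounded_measurable_on_def by blast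
  then have "\<forall>x\<in>S. \<bar>f x + g x\<bar> \<le> M + N"
    by (auto intro: order.trans[OF abs_triangle_ineq] add_mono)
  then show ?thesis
    using assms unfolding bounded_measurable_on_def by auto
qed

lemma bounded_measurable_on_mult:
  assumes "bounded_measurable_on S f" "bounded_measurable_on S g"
  shows "bounded_measurable_on S (\<lambda>x. f x * g x)"
proof -
  obtain M N where "\<forall>x\<in>S. \<bar>f x\<bar> \<le> M" "\<forall>x\<in>S. \<bar>g x\<bar> \<le> N"
    using assms unfolding bounded_measurable_on_def by blast
  then have "\<forall>x\<in>S. \<bar>f x * g x\<bar> \<le> M * N"
    by (auto simp: abs_mult intro: mult_mono')
  then show ?thesis
    using assms unfolding bounded_measurable_on_def by auto
qed

lemma bounded_measurable_on_max:
  assumes "bounded_measurable_on S f" "bounded_measurable_on S g"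
  shows "bounded_measurable_on S (\<lambda>x. max (f x) (g x))"
proof -
  obtain M N where "\<forall>x\<in>S. \<bar>f x\<bar> \<le> M" "\<forall>x\<in>S. \<bar>g x\<bar> \<le> N"
    using assms unfolding bounded_measurable_on_def by blast
  then have "\<forall>x\<in>S. \<bar>max (f x) (g x)\<bar> \<le> max M N"
    by (auto simp: max_def)
  then show ?thesis
    using assms unfolding bounded_measurable_on_def by auto
qed

lemma bounded_measurable_on_integrable:
  assumes "bounded_measurable_on {a..b} f"
  shows "f integrable_on {a..b}"
proof -
  obtain M where M: "\<forall>x\<in>{a..b}. \<bar>f x\<bar> \<le> M"
    and f: "f \<in> borel_measurable (lebesgue_on {a..b})"
    using assms unfolding bounded_measurable_on_def by auto
  show ?thesis
    by (rule measurable_bounded_by_integrable_imp_integrable[OF f, of "\<lambda>_. M"]) (use M in auto)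
qed

lemma riemann_integrable_imp_integrable_on:
  assumes "riemann_integrable f a b"
  shows "f integrable_on {a..b}"
proof -
  obtain I where I: "\<forall>e>0. \<exists>d>0. \<forall>p. p tagged_division_of {a..b} \<and> (\<lambda>x. ball x d) fine p \<longrightarrow>
      \<bar>(\<Sum>(x,J)\<in>p. Henstock_Kurzweil_Integration.content (J::real set) * f x) - I\<bar> < e"
    using assms unfolding riemann_integrable_def by blast
  have "(f has_integral I) (cbox a b)"
    unfolding has_integral
  proof (intro allI impI)
    fix e :: real
    assume "e > 0"
    then obtain d where "d > 0" "\<forall>p. p tagged_division_of {a..b} \<and> (\<lambda>x. ball x d) fine p \<longrightarrow>
        \<bar>(\<Sum>(x,J)\<in>p. Henstock_Kurzweil_Integration.content (J::real set) * f x) - I\<bar> < e"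
      using I by blast
    then show "\<exists>\<gamma>. gauge \<gamma> \<and> (\<forall>\<D>. \<D> tagged_division_of cbox a b \<and> \<gamma> fine \<D> \<longrightarrow>
        norm ((\<Sum>(x, k)\<in>\<D>. Henstock_Kurzweil_Integration.content k *\<^sub>R f x) - I) < e)"
      by (intro exI[of _ "\<lambda>x. ball x d"]) (auto simp: gauge_ball cbox_interval)
  qed
  then show ?thesis
    by (auto simp: integrable_on_def cbox_interval)
qed

lemma bounded_measurable_on_r_fun:
  assumes "f \<in> r_fun K dt U" "bounded U" "{a..b} \<subseteq> {0 .. real K * dt}"
  shows "bounded_measurable_on {a..b} f"
proof -
  have "f integrable_on {0 .. real K * dt}"
    using assms(1) riemann_integrable_imp_integrable_on unfolding r_fun_def by blast
  then have "f \<in> borel_measurable (lebesgue_on {a..b})"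
    using assms(3) by (blast intro: integrable_imp_measurable integrable_on_subinterval)
  moreover obtain M where "\<forall>u\<in>U. norm u \<le> M"
    using assms(2) unfolding bounded_iff by blast
  then have "\<forall>x\<in>{a..b}. \<bar>f x\<bar> \<le> M"
    using assms(1,3) unfolding r_fun_def by auto
  ultimately show ?thesis
    unfolding bounded_measurable_on_def by blast
qed

text \<open>The index \<open>k\<close> of the cell \<open>Tk K dt (k + 1)\<close> containing \<open>\<tau>\<close> is \<open>\<lfloor>\<tau> / dt\<rfloor>\<close>, except at the
  right end point \<open>\<tau> = K dt\<close>, which belongs to the closed last cell.\<close>
lemma mem_Tk_floor:
  assumes "K > 0" "dt > 0" "\<tau> \<in> {0 .. real K * dt}"
  defines "k \<equiv> min (int K - 1) \<lfloor>\<tau> / dt\<rfloor>"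
  shows "0 \<le> k" "\<tau> \<in> Tk K dt (nat k + 1)" "dt * k \<in> Tk K dt (nat k + 1)"
proof -
  have floor: "0 \<le> \<lfloor>\<tau> / dt\<rfloor>" "\<lfloor>\<tau> / dt\<rfloor> * dt \<le> \<tau>" "\<tau> < (\<lfloor>\<tau> / dt\<rfloor> + 1) * dt"
    using assms(2,3) floor_divide_lower[of dt \<tau>] floor_divide_upper[of dt \<tau>] by auto
  show "0 \<le> k"
    using floor(1) assms(1) unfolding k_def by auto
  then have cell: "Tk K dt (nat k + 1) = (if nat k + 1 < K then {k * dt ..< (k + 1) * dt}
      else {real K * dt - dt .. real K * dt})"
    unfolding Tk_def by (simp add: algebra_simps)
  have "\<tau> \<in> Tk K dt (nat k + 1) \<and> dt * k \<in> Tk K dt (nat k + 1)"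
  proof (cases "nat k + 1 < K")
    case True
    then have "k = \<lfloor>\<tau> / dt\<rfloor>"
      unfolding k_def by linarith
    then show ?thesis
      using True floor assms(2) cell by auto
  next
    case False
    have "k \<le> int K - 1"
      unfolding k_def by simp
    with False \<open>0 \<le> k\<close> have "k = int K - 1"
      by linarith
    then have "real K = k + 1"
      by simp
    moreover have "k \<le> \<lfloor>\<tau> / dt\<rfloor>"
      unfolding k_def by simp
    then have "k * dt \<le> \<lfloor>\<tau> / dt\<rfloor> * dt"
      using assms(2) by (intro mult_right_mono) auto
    ultimately have "real K * dt - dt \<le> \<tau>" "real K * dt - dt = dt * k"
      using floor(2) by (auto simp: algebra_simps)
    then show ?thesis
      using False assms(3) cell by auto
  qed
  then show "\<tau> \<in> Tk K dt (nat k + 1)" "dt * k \<in> Tk K dt (nat k + 1)"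
    by auto
qed

lemma pc_fun_eq_floor:
  assumes "f \<in> pc_fun K dt U" "K > 0" "dt > 0" "\<tau> \<in> {0 .. real K * dt}"
  shows "f \<tau> = f (dt * min (int K - 1) \<lfloor>\<tau> / dt\<rfloor>)"
proof -
  define k where "k = min (int K - 1) \<lfloor>\<tau> / dt\<rfloor>"
  have k: "0 \<le> k" "\<tau> \<in> Tk K dt (nat k + 1)" "dt * k \<in> Tk K dt (nat k + 1)"
    using mem_Tk_floor[OF assms(2-4)] unfolding k_def by blast+
  then have "nat k + 1 \<in> {1..K}"
    unfolding k_def by auto
  then obtain c where "\<forall>\<sigma>\<in>Tk K dt (nat k + 1). f \<sigma> = c"
    using assms(1) unfolding pc_fun_def by blast
  then show ?thesis
    using k unfolding k_def by simp
qed

lemma bounded_measurable_on_pc_fun: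
  assumes "f \<in> pc_fun K dt U" "K > 0" "dt > 0" "S \<subseteq> {0 .. real K * dt}" "S \<in> sets lebesgue"
  shows "bounded_measurable_on S f"
proof -
  define g where "g i = f (dt * min (int K - 1) i)" for i
  have f_eq: "f \<tau> = g \<lfloor>\<tau> / dt\<rfloor>" if "\<tau> \<in> S" for \<tau>
    using pc_fun_eq_floor[OF assms(1-3)] that assms(4) unfolding g_def by auto
  have "(\<lambda>\<tau>. \<tau> / dt) \<in> borel_measurable (lebesgue_on S)"
    using assms(3) by (intro continuous_imp_measurable_on_sets_lebesgue continuous_intros assms(5)) auto
  then have "(\<lambda>\<tau>. \<lfloor>\<tau> / dt\<rfloor>) \<in> lebesgue_on S \<rightarrow>\<^sub>M count_space UNIV"
    by (rule measurable_compose[OF _ measurable_real_floor])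
  then have "(\<lambda>\<tau>. g \<lfloor>\<tau> / dt\<rfloor>) \<in> borel_measurable (lebesgue_on S)"
    by (rule measurable_compose_countable[where f = "\<lambda>i \<tau>. g i", rotated]) simp
  then have "f \<in> borel_measurable (lebesgue_on S)"
    by (rule measurable_cong[THEN iffD1, rotated]) (simp add: f_eq)
  moreover have "f ` S \<subseteq> g ` {0 .. int K - 1}"
  proof
    fix y assume "y \<in> f ` S"
    then obtain \<tau> where "\<tau> \<in> S" "y = g \<lfloor>\<tau> / dt\<rfloor>"
      using f_eq by auto
    moreover have "0 \<le> \<lfloor>\<tau> / dt\<rfloor>"
      using \<open>\<tau> \<in> S\<close> assms(3,4) by auto
    ultimately show "y \<in> g ` {0 .. int K - 1}"
      using assms(2) unfolding g_def by (intro image_eqI[of _ _ "min (int K - 1) \<lfloor>\<tau> / dt\<rfloor>"]) auto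
  qed
  then have "bounded (f ` S)"
    by (rule bounded_subset[OF finite_imp_bounded, rotated]) simp
  ultimately show ?thesis
    unfolding bounded_measurable_on_def bounded_iff by auto
qed

lemma pc_fun_convex_comb:
  assumes "convex U" "u \<in> pc_fun K dt U" "v \<in> pc_fun K dt U" "0 \<le> l" "l \<le> 1"
  shows "(\<lambda>\<tau>. l * u \<tau> + (1 - l) * v \<tau>) \<in> pc_fun K dt U"
proof -
  have "l * u \<tau> + (1 - l) * v \<tau> \<in> U" if "\<tau> \<in> {0 .. real K * dt}" for \<tau>
    using assms that convexD[OF assms(1), of "u \<tau>" "v \<tau>" l "1 - l"] unfolding pc_fun_def by auto
  moreover have "\<exists>c. \<forall>\<tau>\<in>Tk K dt k. l * u \<tau> + (1 - l) * v \<tau> = c" if "k \<in> {1..K}" for k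
    using assms(2,3) that unfolding pc_fun_def by fastforce
  ultimately show ?thesis
    unfolding pc_fun_def by blast
qed

lemma pc_fun_nonneg: "f \<in> pc_fun K dt {0..} \<Longrightarrow> \<tau> \<in> {0 .. real K * dt} \<Longrightarrow> 0 \<le> f \<tau>"
  unfolding pc_fun_def by auto

definition soc_rate :: "real \<Rightarrow> real \<Rightarrow> real \<Rightarrow> real" where
  "soc_rate etac etad p = etac * negpart p - (1 / etad) * pospart p"

lemma soc_eq_integral_soc_rate:
  "soc etac etad x0 xu xd xi y0 t =
     y0 + integral {0..t} (\<lambda>\<tau>. soc_rate etac etad (pout (x0 \<tau>) (xu \<tau>) (xd \<tau>) (xi \<tau>)))"
  unfolding soc_def soc_rate_def ..

lemma soc_rate_eq_min:
  assumes "0 < etad" "etac * etad \<le> 1"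
  shows "soc_rate etac etad p = min (- etac * p) (- p / etad)"
proof -
  have "etac \<le> 1 / etad"
    using assms by (simp add: field_simps)
  then have "etac * p \<le> p / etad" if "p \<ge> 0"
    using mult_right_mono[OF _ that, of etac "1 / etad"] by simp
  moreover have "etac * (- p) \<le> - p / etad" if "p < 0"
    using mult_right_mono[of etac "1 / etad" "- p"] \<open>etac \<le> 1 / etad\<close> that by simp
  ultimately show ?thesis
    unfolding soc_rate_def pospart_def negpart_def by (cases "p \<ge> 0") auto
qed

lemma soc_rate_antimono:
  assumes "0 \<le> etac" "0 < etad" "p \<le> q"
  shows "soc_rate etac etad q \<le> soc_rate etac etad p"
  unfolding soc_rate_def pospart_def negpart_def
  using assms by (intro diff_mono mult_left_mono) auto

lemma soc_rate_concave:
  assumes "0 < etad" "etac * etad \<le> 1" "0 \<le> l" "l \<le> 1"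
  shows "l * soc_rate etac etad p + (1 - l) * soc_rate etac etad q
    \<le> soc_rate etac etad (l * p + (1 - l) * q)"
proof -
  let ?m = "\<lambda>p. min (- etac * p) (- p / etad)"
  have "l * ?m p + (1 - l) * ?m q \<le> l * (- etac * p) + (1 - l) * (- etac * q)"
    "l * ?m p + (1 - l) * ?m q \<le> l * (- p / etad) + (1 - l) * (- q / etad)"
    using assms by (intro add_mono mult_left_mono; simp)+
  then have "l * ?m p + (1 - l) * ?m q \<le> ?m (l * p + (1 - l) * q)"
    by (simp add: algebra_simps add_divide_distrib diff_divide_distrib)
  then show ?thesis
    unfolding soc_rate_eq_min[OF assms(1,2)] .
qed

lemma bounded_measurable_on_soc_rate:
  "bounded_measurable_on S q \<Longrightarrow> bounded_measurable_on S (\<lambda>\<tau>. soc_rate etac etad (q \<tau>))"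
  unfolding soc_rate_def pospart_def negpart_def diff_conv_add_uminus
  by (intro bounded_measurable_on_add bounded_measurable_on_mult bounded_measurable_on_const
      bounded_measurable_on_uminus bounded_measurable_on_max)

lemma bounded_measurable_on_pout:
  assumes "bounded_measurable_on S a" "bounded_measurable_on S b"
    "bounded_measurable_on S c" "bounded_measurable_on S s"
  shows "bounded_measurable_on S (\<lambda>\<tau>. pout (a \<tau>) (b \<tau>) (c \<tau>) (s \<tau>))"
  unfolding pout_def pospart_def negpart_def diff_conv_add_uminus
  by (intro assms bounded_measurable_on_add bounded_measurable_on_mult bounded_measurable_on_const
      bounded_measurable_on_uminus bounded_measurable_on_max)

lemma pout_affine:
  "pout (l * a + (1 - l) * a') b c s = l * pout a b c s + (1 - l) * pout a' b c s"
  "pout a (l * b + (1 - l) * b') c s = l * pout a b c s + (1 - l) * pout a b' c s"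
  "pout a b (l * c + (1 - l) * c') s = l * pout a b c s + (1 - l) * pout a b c' s"
  by (simp_all add: pout_def algebra_simps)

lemma pout_mono_a: "a \<le> a' \<Longrightarrow> pout a b c s \<le> pout a' b c s"
  by (simp add: pout_def)

lemma pout_mono_b: "b \<le> b' \<Longrightarrow> pout a b c s \<le> pout a b' c s"
  by (simp add: pout_def pospart_def mult_left_mono)

lemma pout_antimono_c: "c \<le> c' \<Longrightarrow> pout a b c' s \<le> pout a b c s"
  by (simp add: pout_def negpart_def mult_left_mono)

lemma pout_mono_s: "s \<le> s' \<Longrightarrow> 0 \<le> b \<Longrightarrow> 0 \<le> c \<Longrightarrow> pout a b c s \<le> pout a b c s'"
  unfolding pout_def pospart_def negpart_def
  by (intro add_mono diff_mono mult_right_mono) auto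

lemma concave_fun_soc_integral:
  assumes "0 < etad" "etac * etad \<le> 1"
    and convex: "\<And>u v l. u \<in> S \<Longrightarrow> v \<in> S \<Longrightarrow> 0 \<le> l \<Longrightarrow> l \<le> 1 \<Longrightarrow>
      (\<lambda>\<tau>. l * u \<tau> + (1 - l) * v \<tau>) \<in> S"
    and bm: "\<And>u. u \<in> S \<Longrightarrow> bounded_measurable_on {0..t} (P u)"
    and affine: "\<And>u v l \<tau>. P (\<lambda>\<tau>. l * u \<tau> + (1 - l) * v \<tau>) \<tau> = l * P u \<tau> + (1 - l) * P v \<tau>"
  shows "concave_fun S (\<lambda>u. y0 + integral {0..t} (\<lambda>\<tau>. soc_rate etac etad (P u \<tau>)))"
  unfolding concave_fun_def
proof (intro ballI allI impI)
  fix u v and l :: real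
  assume uv: "u \<in> S" "v \<in> S" and l: "0 \<le> l \<and> l \<le> 1"
  define r where "r w \<tau> = soc_rate etac etad (P w \<tau>)" for w \<tau>
  have bm_r: "bounded_measurable_on {0..t} (r w)" if "w \<in> S" for w
    unfolding r_def by (intro bounded_measurable_on_soc_rate bm that)
  have int: "r u integrable_on {0..t}" "r v integrable_on {0..t}"
    "(\<lambda>\<tau>. l * r u \<tau> + (1 - l) * r v \<tau>) integrable_on {0..t}"
    "r (\<lambda>\<tau>. l * u \<tau> + (1 - l) * v \<tau>) integrable_on {0..t}"
    using uv l convex
    by (intro bounded_measurable_on_integrable bm_r bounded_measurable_on_add
        bounded_measurable_on_mult bounded_measurable_on_const; simp)+
  have "l * integral {0..t} (r u) + (1 - l) * integral {0..t} (r v)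
      = integral {0..t} (\<lambda>\<tau>. l * r u \<tau> + (1 - l) * r v \<tau>)"
    using integral_add[OF integrable_on_cmult_left[OF int(1)] integrable_on_cmult_left[OF int(2)]]
      integral_mult[OF int(1), of l] integral_mult[OF int(2), of "1 - l"]
    by simp
  also have "\<dots> \<le> integral {0..t} (r (\<lambda>\<tau>. l * u \<tau> + (1 - l) * v \<tau>))"
  proof (rule integral_le[OF int(3,4)])
    show "l * r u \<tau> + (1 - l) * r v \<tau> \<le> r (\<lambda>\<tau>. l * u \<tau> + (1 - l) * v \<tau>) \<tau>" for \<tau>
      using l unfolding r_def affine by (intro soc_rate_concave assms(1,2)) auto
  qed
  finally show "l * (y0 + integral {0..t} (r u)) + (1 - l) * (y0 + integral {0..t} (r v))
      \<le> y0 + integral {0..t} (r (\<lambda>\<tau>. l * u \<tau> + (1 - l) * v \<tau>))"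
    by (simp add: algebra_simps)
qed

lemma soc_integral_antimono:
  assumes "0 \<le> etac" "0 < etad"
    and "bounded_measurable_on {0..t} p" "bounded_measurable_on {0..t} q"
    and "\<And>\<tau>. \<tau> \<in> {0..t} \<Longrightarrow> p \<tau> \<le> q \<tau>"
  shows "y0 + integral {0..t} (\<lambda>\<tau>. soc_rate etac etad (q \<tau>))
    \<le> y0 + integral {0..t} (\<lambda>\<tau>. soc_rate etac etad (p \<tau>))"
proof -
  have "integral {0..t} (\<lambda>\<tau>. soc_rate etac etad (q \<tau>)) \<le> integral {0..t} (\<lambda>\<tau>. soc_rate etac etad (p \<tau>))"
    using assms
    by (intro integral_le bounded_measurable_on_integrable bounded_measurable_on_soc_rate
        soc_rate_antimono) auto
  then show ?thesis
    by simp
qed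

lemma antimono_fun_soc_integral:
  assumes "0 \<le> etac" "0 < etad"
    and "\<And>u. u \<in> S \<Longrightarrow> bounded_measurable_on {0..t} (P u)"
    and "\<And>u v \<tau>. u \<in> S \<Longrightarrow> v \<in> S \<Longrightarrow> \<forall>\<sigma>\<in>{0..T}. u \<sigma> \<le> v \<sigma> \<Longrightarrow> \<tau> \<in> {0..t} \<Longrightarrow>
      P u \<tau> \<le> P v \<tau>"
  shows "antimono_fun T S (\<lambda>u. y0 + integral {0..t} (\<lambda>\<tau>. soc_rate etac etad (P u \<tau>)))"
  unfolding antimono_fun_def using assms by (intro ballI impI soc_integral_antimono) auto

lemma mono_fun_soc_integral:
  assumes "0 \<le> etac" "0 < etad"
    and "\<And>u. u \<in> S \<Longrightarrow> bounded_measurable_on {0..t} (P u)"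
    and "\<And>u v \<tau>. u \<in> S \<Longrightarrow> v \<in> S \<Longrightarrow> \<forall>\<sigma>\<in>{0..T}. u \<sigma> \<le> v \<sigma> \<Longrightarrow> \<tau> \<in> {0..t} \<Longrightarrow>
      P v \<tau> \<le> P u \<tau>"
  shows "mono_fun T S (\<lambda>u. y0 + integral {0..t} (\<lambda>\<tau>. soc_rate etac etad (P u \<tau>)))"
  unfolding mono_fun_def using assms by (intro ballI impI soc_integral_antimono) auto

theorem proposition2:
  fixes K :: nat and dt etac etad y0 t :: real
  assumes "K > 0" and "dt > 0"
    and "0 < etac" "etac < 1" and "0 < etad" "etad < 1"
    and "y0 \<ge> 0" and "t \<in> {0 .. real K * dt}"
  shows
    "(\<forall>xu\<in>pc_fun K dt {0..}. \<forall>xd\<in>pc_fun K dt {0..}. \<forall>xi\<in>r_fun K dt {-1..1}.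
        concave_fun (pc_fun K dt UNIV) (\<lambda>x0. soc etac etad x0 xu xd xi y0 t) \<and>
        antimono_fun (real K * dt) (pc_fun K dt UNIV) (\<lambda>x0. soc etac etad x0 xu xd xi y0 t))
   \<and> (\<forall>x0\<in>pc_fun K dt UNIV. \<forall>xd\<in>pc_fun K dt {0..}. \<forall>xi\<in>r_fun K dt {-1..1}.
        concave_fun (pc_fun K dt {0..}) (\<lambda>xu. soc etac etad x0 xu xd xi y0 t) \<and>
        antimono_fun (real K * dt) (pc_fun K dt {0..}) (\<lambda>xu. soc etac etad x0 xu xd xi y0 t))
   \<and> (\<forall>x0\<in>pc_fun K dt UNIV. \<forall>xu\<in>pc_fun K dt {0..}. \<forall>xi\<in>r_fun K dt {-1..1}.
        concave_fun (pc_fun K dt {0..}) (\<lambda>xd. soc etac etad x0 xu xd xi y0 t) \<and>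
        mono_fun (real K * dt) (pc_fun K dt {0..}) (\<lambda>xd. soc etac etad x0 xu xd xi y0 t))
   \<and> (\<forall>x0\<in>pc_fun K dt UNIV. \<forall>xu\<in>pc_fun K dt {0..}. \<forall>xd\<in>pc_fun K dt {0..}.
        antimono_fun (real K * dt) (r_fun K dt {-1..1}) (\<lambda>xi. soc etac etad x0 xu xd xi y0 t))"
proof -
  have etas: "0 \<le> etac" "0 < etad" "etac * etad \<le> 1"
    using assms(3-6) mult_le_one[of etac etad] by auto
  have interval: "{0..t} \<subseteq> {0 .. real K * dt}"
    using assms(8) by auto
  have pc: "bounded_measurable_on {0..t} f" if "f \<in> pc_fun K dt U" for f U
    using bounded_measurable_on_pc_fun[OF that assms(1,2) interval] by simp
  have bm: "bounded_measurable_on {0..t} (\<lambda>\<tau>. pout (a \<tau>) (b \<tau>) (c \<tau>) (s \<tau>))"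
    if "a \<in> pc_fun K dt UNIV" "b \<in> pc_fun K dt {0..}" "c \<in> pc_fun K dt {0..}"
      "s \<in> r_fun K dt {-1..1}" for a b c s
    using that(4) interval
    by (intro bounded_measurable_on_pout pc[OF that(1)] pc[OF that(2)] pc[OF that(3)]
        bounded_measurable_on_r_fun) auto
  show ?thesis
    unfolding soc_eq_integral_soc_rate
    by (intro conjI ballI concave_fun_soc_integral antimono_fun_soc_integral mono_fun_soc_integral
        bm pc_fun_convex_comb etas convex_UNIV convex_real_interval)
    (use assms(8) in \<open>auto simp: pout_affine
      intro!: pout_mono_a pout_mono_b pout_antimono_c pout_mono_s intro: pc_fun_nonneg\<close>)
qed

end
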